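(* Let $\mathcal C$ have a right duality, let $(A,m,\eta,\Delta,\epsilon)$ be a Frobenius algebra in $\mathcal C$ with an $A$-swap $(\tilde c_X)_X$, and assume $A$ is swap-commutative. Then the morphism $\Phi:=(\epsilon\otimes\mathrm{id}_{A^\vee})\circ(m\otimes\mathrm{id}_{A^\vee})\circ(\mathrm{id}_A\otimes b_A)$ lies in $\mathrm{Hom}_A(A,A^\vee)$, where $A=(A,m)$ and $A^\vee$ is the dual module of $A$, and $\Phi$ is an isomorphism of $A$-modules. Thus $A$ is self-dual as an $A$-module.
   Context: Throughout, $\mathcal C$ is a strict tensor (monoidal) category with tensor unit $I$ which is abelian and whose tensor product of morphisms is $k$-additive in each factor, where $k:=\mathrm{Hom}(I,I)$ is the (commutative) ground ring. An algebra in $\mathcal C$ is a triple $(A,m,\eta)$ with $A$ an object, $m\in\mathrm{Hom}(A\otimes A,A)$, $\eta\in\mathrm{Hom}(I,A)$, such that $m\circ(\mathrm{id}_A\otimes m)=m\circ(m\otimes\mathrm{id}_A)$ and $m\circ(\mathrm{id}_A\otimes\eta)=\mathrm{id}_A=m\circ(\eta\otimes\mathrm{id}_A)$. A coalgebra is a triple $(A,\Delta,\epsilon)$ with $\Delta\in\mathrm{Hom}(A,A\otimes A)$, $\epsilon\in\mathrm{Hom}(A,I)$, $(\Delta\otimes\mathrm{id}_A)\circ\Delta=(\mathrm{id}_A\otimes\Delta)\circ\Delta$ and $(\mathrm{id}_A\otimes\epsilon)\circ\Delta=\mathrm{id}_A=(\epsilon\otimes\mathrm{id}_A)\circ\Delta$.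 A Frobenius algebra is a quintuple $(A,m,\eta,\Delta,\epsilon)$ such that $(A,m,\eta)$ is an algebra, $(A,\Delta,\epsilon)$ a coalgebra, and $(\mathrm{id}_A\otimes m)\circ(\Delta\otimes\mathrm{id}_A)=\Delta\circ m=(m\otimes\mathrm{id}_A)\circ(\mathrm{id}_A\otimes\Delta)$. A (left) $A$-module is a pair $M=(\dot M,\rho_M)$ with $\rho_M\in\mathrm{Hom}(A\otimes\dot M,\dot M)$, $\rho_M\circ(m\otimes\mathrm{id}_{\dot M})=\rho_M\circ(\mathrm{id}_A\otimes\rho_M)$, $\rho_M\circ(\eta\otimes\mathrm{id}_{\dot M})=\mathrm{id}_{\dot M}$; $\mathrm{Hom}_A(M,N):=\{f\in\mathrm{Hom}(\dot M,\dot N)\mid f\circ\rho_M=\rho_N\circ(\mathrm{id}_A\otimes f)\}$. A right duality assigns to each object $X$ an object $X^\vee$ and morphisms $b_X\in\mathrm{Hom}(I,X\otimes X^\vee)$, $d_X\in\mathrm{Hom}(X^\vee\otimes X,I)$ with $(\mathrm{id}_X\otimes d_X)\circ(b_X\otimes\mathrm{id}_X)=\mathrm{id}_X$ and $(d_X\otimes\mathrm{id}_{X^\vee})\circ(\mathrm{id}_{X^\vee}\otimes b_X)=\mathrm{id}_{X^\vee}$. An $A$-swap is a family of isomorphisms $\tilde c_X\in\mathrm{Hom}(X\otimes A,A\otimes X)$, one for each object $X$, such that for all objects $X,Y$: $(m\otimes\mathrm{id}_X)\circ(\mathrm{id}_A\otimes\tilde c_X)\circ(\tilde c_X\otimes\mathrm{id}_A)=\tilde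 c_X\circ(\mathrm{id}_X\otimes m)$, $\tilde c_X\circ(\mathrm{id}_X\otimes\eta)=\eta\otimes\mathrm{id}_X$, $\tilde c_{X\otimes Y}=(\tilde c_X\otimes\mathrm{id}_Y)\circ(\mathrm{id}_X\otimes\tilde c_Y)$, and $\tilde c_Y\circ(f\otimes g)=(g\otimes f)\circ\tilde c_X$ for all $f\in\mathrm{Hom}(X,Y)$, $g\in\mathrm{Hom}(A,A)$. The algebra $A$ is swap-commutative if $m\circ\tilde c_A=m$. Dual module: for a left $A$-module $M$, $M^\vee:=(\dot M^\vee,\rho_M^\wedge)$ with $\rho_M^\wedge:=(d_{\dot M}\otimes\mathrm{id}_{\dot M^\vee})\circ(\mathrm{id}_{\dot M^\vee}\otimes\rho_M\otimes\mathrm{id}_{\dot M^\vee})\circ((\tilde c_{\dot M^\vee})^{-1}\otimes b_{\dot M})\in\mathrm{Hom}(A\otimes\dot M^\vee,\dot M^\vee)$; this is a left $A$-module. *)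

theory Defs
  imports Main
begin

text \<open>A category is given by a set of objects, hom-sets, composition
  (cmp g f = g after f) and identities.\<close>

record ('o, 'm) tcat =
  Ob    :: "'o set"
  Hom   :: "'o \<Rightarrow> 'o \<Rightarrow> 'm set"
  cmp   :: "'m \<Rightarrow> 'm \<Rightarrow> 'm"
  idm   :: "'o \<Rightarrow> 'm"
  tobj  :: "'o \<Rightarrow> 'o \<Rightarrow> 'o"
  tmor  :: "'m \<Rightarrow> 'm \<Rightarrow> 'm"
  unit  :: "'o"
  madd  :: "'m \<Rightarrow> 'm \<Rightarrow> 'm"
  mzero :: "'o \<Rightarrow> 'o \<Rightarrow> 'm"
  mneg  :: "'m \<Rightarrow> 'm"

definition is_category :: "('o, 'm) tcat \<Rightarrow> bool" where
  "is_category C \<longleftrightarrow>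
     (\<forall>X Y. (X \<notin> Ob C \<or> Y \<notin> Ob C) \<longrightarrow> Hom C X Y = {}) \<and>
     (\<forall>X Y X' Y' f. f \<in> Hom C X Y \<longrightarrow> f \<in> Hom C X' Y' \<longrightarrow> X = X' \<and> Y = Y') \<and>
     (\<forall>X \<in> Ob C. idm C X \<in> Hom C X X) \<and>
     (\<forall>X Y Z f g. f \<in> Hom C X Y \<longrightarrow> g \<in> Hom C Y Z \<longrightarrow> cmp C g f \<in> Hom C X Z) \<and>
     (\<forall>W X Y Z f g h. f \<in> Hom C W X \<longrightarrow> g \<in> Hom C X Y \<longrightarrow> h \<in> Hom C Y Z \<longrightarrow>
         cmp C h (cmp C g f) = cmp C (cmp C h g) f) \<and>
     (\<forall>X Y f. f \<in> Hom C X Y \<longrightarrow> cmp C f (idm C X) = f \<and> cmp C (idm C Y) f = f)"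

definition is_strict_monoidal :: "('o, 'm) tcat \<Rightarrow> bool" where
  "is_strict_monoidal C \<longleftrightarrow>
     unit C \<in> Ob C \<and>
     (\<forall>X \<in> Ob C. \<forall>Y \<in> Ob C. tobj C X Y \<in> Ob C) \<and>
     (\<forall>X \<in> Ob C. \<forall>Y \<in> Ob C. \<forall>Z \<in> Ob C. tobj C (tobj C X Y) Z = tobj C X (tobj C Y Z)) \<and>
     (\<forall>X \<in> Ob C. tobj C (unit C) X = X \<and> tobj C X (unit C) = X) \<and>
     (\<forall>X Y X' Y' f g. f \<in> Hom C X Y \<longrightarrow> g \<in> Hom C X' Y' \<longrightarrow>
         tmor C f g \<in> Hom C (tobj C X X') (tobj C Y Y')) \<and>
     (\<forall>X Y X' Y' X'' Y'' f g h. f \<in> Hom C X Y \<longrightarrow> g \<in> Hom C X' Y' \<longrightarrow> h \<in> Hom C X'' Y'' \<longrightarrow>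
         tmor C (tmor C f g) h = tmor C f (tmor C g h)) \<and>
     (\<forall>X Y f. f \<in> Hom C X Y \<longrightarrow>
         tmor C (idm C (unit C)) f = f \<and> tmor C f (idm C (unit C)) = f) \<and>
     (\<forall>X \<in> Ob C. \<forall>Y \<in> Ob C. tmor C (idm C X) (idm C Y) = idm C (tobj C X Y)) \<and>
     (\<forall>X Y Z X' Y' Z' f g f' g'. f \<in> Hom C X Y \<longrightarrow> g \<in> Hom C Y Z \<longrightarrow>
         f' \<in> Hom C X' Y' \<longrightarrow> g' \<in> Hom C Y' Z' \<longrightarrow>
         tmor C (cmp C g f) (cmp C g' f') = cmp C (tmor C g g') (tmor C f f'))"

definition is_preadditive :: "('o, 'm) tcat \<Rightarrow> bool" where
  "is_preadditive C \<longleftrightarrow>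
     (\<forall>X \<in> Ob C. \<forall>Y \<in> Ob C.
        mzero C X Y \<in> Hom C X Y \<and>
        (\<forall>f \<in> Hom C X Y. \<forall>g \<in> Hom C X Y. madd C f g \<in> Hom C X Y) \<and>
        (\<forall>f \<in> Hom C X Y. mneg C f \<in> Hom C X Y) \<and>
        (\<forall>f \<in> Hom C X Y. \<forall>g \<in> Hom C X Y. \<forall>h \<in> Hom C X Y.
            madd C (madd C f g) h = madd C f (madd C g h)) \<and>
        (\<forall>f \<in> Hom C X Y. \<forall>g \<in> Hom C X Y. madd C f g = madd C g f) \<and>
        (\<forall>f \<in> Hom C X Y. madd C f (mzero C X Y) = f) \<and>
        (\<forall>f \<in> Hom C X Y. madd C f (mneg C f) = mzero C X Y)) \<and>
     (\<forall>X Y Z f g g'. f \<in> Hom C X Y \<longrightarrow> g \<in> Hom C Y Z \<longrightarrow> g' \<in> Hom C Y Z \<longrightarrow>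
         cmp C (madd C g g') f = madd C (cmp C g f) (cmp C g' f)) \<and>
     (\<forall>X Y Z f f' g. f \<in> Hom C X Y \<longrightarrow> f' \<in> Hom C X Y \<longrightarrow> g \<in> Hom C Y Z \<longrightarrow>
         cmp C g (madd C f f') = madd C (cmp C g f) (cmp C g f'))"

definition tensor_additive :: "('o, 'm) tcat \<Rightarrow> bool" where
  "tensor_additive C \<longleftrightarrow>
     (\<forall>X Y X' Y' f f' h. f \<in> Hom C X Y \<longrightarrow> f' \<in> Hom C X Y \<longrightarrow> h \<in> Hom C X' Y' \<longrightarrow>
         tmor C (madd C f f') h = madd C (tmor C f h) (tmor C f' h) \<and>
         tmor C h (madd C f f') = madd C (tmor C h f) (tmor C h f'))"

definition is_kernel :: "('o, 'm) tcat \<Rightarrow> 'o \<Rightarrow> 'o \<Rightarrow> 'm \<Rightarrow> 'o \<Rightarrow> 'm \<Rightarrow> bool" where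
  "is_kernel C X Y f K k \<longleftrightarrow>
     f \<in> Hom C X Y \<and> k \<in> Hom C K X \<and> cmp C f k = mzero C K Y \<and>
     (\<forall>W g. g \<in> Hom C W X \<longrightarrow> cmp C f g = mzero C W Y \<longrightarrow>
         (\<exists>!u. u \<in> Hom C W K \<and> cmp C k u = g))"

definition is_cokernel :: "('o, 'm) tcat \<Rightarrow> 'o \<Rightarrow> 'o \<Rightarrow> 'm \<Rightarrow> 'o \<Rightarrow> 'm \<Rightarrow> bool" where
  "is_cokernel C X Y f Q q \<longleftrightarrow>
     f \<in> Hom C X Y \<and> q \<in> Hom C Y Q \<and> cmp C q f = mzero C X Q \<and>
     (\<forall>W g. g \<in> Hom C Y W \<longrightarrow> cmp C g f = mzero C X W \<longrightarrow>
         (\<exists>!u. u \<in> Hom C Q W \<and> cmp C u q = g))"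

definition is_mono :: "('o, 'm) tcat \<Rightarrow> 'o \<Rightarrow> 'o \<Rightarrow> 'm \<Rightarrow> bool" where
  "is_mono C X Y f \<longleftrightarrow> f \<in> Hom C X Y \<and>
     (\<forall>W g h. g \<in> Hom C W X \<longrightarrow> h \<in> Hom C W X \<longrightarrow> cmp C f g = cmp C f h \<longrightarrow> g = h)"

definition is_epi :: "('o, 'm) tcat \<Rightarrow> 'o \<Rightarrow> 'o \<Rightarrow> 'm \<Rightarrow> bool" where
  "is_epi C X Y f \<longleftrightarrow> f \<in> Hom C X Y \<and>
     (\<forall>W g h. g \<in> Hom C Y W \<longrightarrow> h \<in> Hom C Y W \<longrightarrow> cmp C g f = cmp C h f \<longrightarrow> g = h)"

definition is_abelian :: "('o, 'm) tcat \<Rightarrow> bool" where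
  "is_abelian C \<longleftrightarrow>
     is_preadditive C \<and>
     (\<exists>Z \<in> Ob C. idm C Z = mzero C Z Z) \<and>
     (\<forall>X \<in> Ob C. \<forall>Y \<in> Ob C. \<exists>P i1 i2 p1 p2. P \<in> Ob C \<and>
        i1 \<in> Hom C X P \<and> i2 \<in> Hom C Y P \<and> p1 \<in> Hom C P X \<and> p2 \<in> Hom C P Y \<and>
        cmp C p1 i1 = idm C X \<and> cmp C p2 i2 = idm C Y \<and>
        madd C (cmp C i1 p1) (cmp C i2 p2) = idm C P) \<and>
     (\<forall>X Y f. f \<in> Hom C X Y \<longrightarrow>
        (\<exists>K k. is_kernel C X Y f K k) \<and> (\<exists>Q q. is_cokernel C X Y f Q q)) \<and>
     (\<forall>X Y f. is_mono C X Y f \<longrightarrow> (\<exists>Z g. is_kernel C Y Z g X f)) \<and>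
     (\<forall>X Y f. is_epi C X Y f \<longrightarrow> (\<exists>W g. is_cokernel C W X g Y f))"

definition strict_abelian_tensor_cat :: "('o, 'm) tcat \<Rightarrow> bool" where
  "strict_abelian_tensor_cat C \<longleftrightarrow>
     is_category C \<and> is_strict_monoidal C \<and> is_abelian C \<and> tensor_additive C"

definition iso_mor :: "('o, 'm) tcat \<Rightarrow> 'o \<Rightarrow> 'o \<Rightarrow> 'm \<Rightarrow> bool" where
  "iso_mor C X Y f \<longleftrightarrow> f \<in> Hom C X Y \<and>
     (\<exists>g \<in> Hom C Y X. cmp C g f = idm C X \<and> cmp C f g = idm C Y)"

definition inv_mor :: "('o, 'm) tcat \<Rightarrow> 'o \<Rightarrow> 'o \<Rightarrow> 'm \<Rightarrow> 'm" where
  "inv_mor C X Y f = (SOME g. g \<in> Hom C Y X \<and> cmp C g f = idm C X \<and> cmp C f g = idm C Y)"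

definition right_duality ::
  "('o, 'm) tcat \<Rightarrow> ('o \<Rightarrow> 'o) \<Rightarrow> ('o \<Rightarrow> 'm) \<Rightarrow> ('o \<Rightarrow> 'm) \<Rightarrow> bool" where
  "right_duality C dl b d \<longleftrightarrow>
     (\<forall>X \<in> Ob C. dl X \<in> Ob C \<and>
        b X \<in> Hom C (unit C) (tobj C X (dl X)) \<and>
        d X \<in> Hom C (tobj C (dl X) X) (unit C) \<and>
        cmp C (tmor C (idm C X) (d X)) (tmor C (b X) (idm C X)) = idm C X \<and>
        cmp C (tmor C (d X) (idm C (dl X))) (tmor C (idm C (dl X)) (b X)) = idm C (dl X))"

definition is_algebra :: "('o, 'm) tcat \<Rightarrow> 'o \<Rightarrow> 'm \<Rightarrow> 'm \<Rightarrow> bool" where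
  "is_algebra C A m \<eta> \<longleftrightarrow>
     A \<in> Ob C \<and> m \<in> Hom C (tobj C A A) A \<and> \<eta> \<in> Hom C (unit C) A \<and>
     cmp C m (tmor C (idm C A) m) = cmp C m (tmor C m (idm C A)) \<and>
     cmp C m (tmor C (idm C A) \<eta>) = idm C A \<and>
     cmp C m (tmor C \<eta> (idm C A)) = idm C A"

definition is_coalgebra :: "('o, 'm) tcat \<Rightarrow> 'o \<Rightarrow> 'm \<Rightarrow> 'm \<Rightarrow> bool" where
  "is_coalgebra C A \<Delta> \<epsilon> \<longleftrightarrow>
     A \<in> Ob C \<and> \<Delta> \<in> Hom C A (tobj C A A) \<and> \<epsilon> \<in> Hom C A (unit C) \<and>
     cmp C (tmor C \<Delta> (idm C A)) \<Delta> = cmp C (tmor C (idm C A) \<Delta>) \<Delta> \<and>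
     cmp C (tmor C (idm C A) \<epsilon>) \<Delta> = idm C A \<and>
     cmp C (tmor C \<epsilon> (idm C A)) \<Delta> = idm C A"

definition is_frobenius :: "('o, 'm) tcat \<Rightarrow> 'o \<Rightarrow> 'm \<Rightarrow> 'm \<Rightarrow> 'm \<Rightarrow> 'm \<Rightarrow> bool" where
  "is_frobenius C A m \<eta> \<Delta> \<epsilon> \<longleftrightarrow>
     is_algebra C A m \<eta> \<and> is_coalgebra C A \<Delta> \<epsilon> \<and>
     cmp C (tmor C (idm C A) m) (tmor C \<Delta> (idm C A)) = cmp C \<Delta> m \<and>
     cmp C \<Delta> m = cmp C (tmor C m (idm C A)) (tmor C (idm C A) \<Delta>)"

definition is_A_swap :: "('o, 'm) tcat \<Rightarrow> 'o \<Rightarrow> 'm \<Rightarrow> 'm \<Rightarrow> ('o \<Rightarrow> 'm) \<Rightarrow> bool" where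
  "is_A_swap C A m \<eta> cs \<longleftrightarrow>
     (\<forall>X \<in> Ob C. iso_mor C (tobj C X A) (tobj C A X) (cs X) \<and>
        cmp C (tmor C m (idm C X)) (cmp C (tmor C (idm C A) (cs X)) (tmor C (cs X) (idm C A)))
          = cmp C (cs X) (tmor C (idm C X) m) \<and>
        cmp C (cs X) (tmor C (idm C X) \<eta>) = tmor C \<eta> (idm C X)) \<and>
     (\<forall>X \<in> Ob C. \<forall>Y \<in> Ob C.
        cs (tobj C X Y) = cmp C (tmor C (cs X) (idm C Y)) (tmor C (idm C X) (cs Y))) \<and>
     (\<forall>X Y f g. f \<in> Hom C X Y \<longrightarrow> g \<in> Hom C A A \<longrightarrow>
        cmp C (cs Y) (tmor C f g) = cmp C (tmor C g f) (cs X))"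

definition is_module :: "('o, 'm) tcat \<Rightarrow> 'o \<Rightarrow> 'm \<Rightarrow> 'm \<Rightarrow> 'o \<Rightarrow> 'm \<Rightarrow> bool" where
  "is_module C A m \<eta> M \<rho> \<longleftrightarrow>
     M \<in> Ob C \<and> \<rho> \<in> Hom C (tobj C A M) M \<and>
     cmp C \<rho> (tmor C m (idm C M)) = cmp C \<rho> (tmor C (idm C A) \<rho>) \<and>
     cmp C \<rho> (tmor C \<eta> (idm C M)) = idm C M"

definition homA :: "('o, 'm) tcat \<Rightarrow> 'o \<Rightarrow> 'o \<Rightarrow> 'm \<Rightarrow> 'o \<Rightarrow> 'm \<Rightarrow> 'm set" where
  "homA C A M \<rho>M N \<rho>N =
     {f \<in> Hom C M N. cmp C f \<rho>M = cmp C \<rho>N (tmor C (idm C A) f)}"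

definition dual_action ::
  "('o, 'm) tcat \<Rightarrow> 'o \<Rightarrow> ('o \<Rightarrow> 'm) \<Rightarrow> ('o \<Rightarrow> 'o) \<Rightarrow> ('o \<Rightarrow> 'm) \<Rightarrow> ('o \<Rightarrow> 'm)
     \<Rightarrow> 'o \<Rightarrow> 'm \<Rightarrow> 'm" where
  "dual_action C A cs dl b d M \<rho> =
     cmp C (tmor C (d M) (idm C (dl M)))
       (cmp C (tmor C (tmor C (idm C (dl M)) \<rho>) (idm C (dl M)))
          (tmor C (inv_mor C (tobj C (dl M) A) (tobj C A (dl M)) (cs (dl M))) (b M)))"

definition frob_Phi ::
  "('o, 'm) tcat \<Rightarrow> 'o \<Rightarrow> 'm \<Rightarrow> 'm \<Rightarrow> ('o \<Rightarrow> 'o) \<Rightarrow> ('o \<Rightarrow> 'm) \<Rightarrow> 'm" where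
  "frob_Phi C A m \<epsilon> dl b =
     cmp C (tmor C \<epsilon> (idm C (dl A)))
       (cmp C (tmor C m (idm C (dl A))) (tmor C (idm C A) (b A)))"

end

theory Submission
  imports Defs
begin

text \<open>Transposing the Frobenius form \<open>\<epsilon> \<cdot> m\<close> along the right duality gives \<open>\<Phi> : A \<rightarrow> A\<^sup>\<or>\<close>.
  The Frobenius form is nondegenerate: together with the copairing \<open>\<Delta> \<cdot> \<eta>\<close> it satisfies both
  zigzag identities, and these say exactly that \<open>(d\<^sub>A \<otimes> id) \<cdot> (id \<otimes> \<Delta> \<cdot> \<eta>)\<close> is a two-sided
  inverse of \<open>\<Phi>\<close>.  The action on \<open>A\<^sup>\<or>\<close> is itself a transpose, of the pairing
  \<open>a \<otimes> \<xi> \<otimes> x \<mapsto> \<xi>(a x)\<close> twisted by the inverse swap; since morphisms into a dual are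
  determined by their pairing with the evaluation, \<open>A\<close>-linearity of \<open>\<Phi>\<close> reduces to the
  associativity \<open>\<epsilon>((a b) x) = \<epsilon>(a (b x))\<close> of the Frobenius form, once swap-commutativity has
  removed the twist.\<close>

locale strict_monoidal_category =
  fixes C :: "('o, 'm) tcat"
  assumes category: "is_category C"
    and strict_monoidal: "is_strict_monoidal C"
begin

abbreviation comp_mor (infixr "\<cdot>" 55) where "g \<cdot> f \<equiv> cmp C g f"
abbreviation tensor_mor (infixr "\<otimes>" 60) where "f \<otimes> g \<equiv> tmor C f g"
abbreviation tensor_obj (infixr "\<odot>" 65) where "X \<odot> Y \<equiv> tobj C X Y"
abbreviation ident_mor ("\<one>\<^bsub>_\<^esub>") where "\<one>\<^bsub>X\<^esub> \<equiv> idm C X"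
abbreviation unit_obj ("\<I>") where "\<I> \<equiv> unit C"

text \<open>Since every morphism lies in exactly one hom-set, source and target are functions of
  the morphism; phrasing typing side conditions through them lets the simplifier discharge
  them.\<close>

definition arr :: "'m \<Rightarrow> bool" where
  "arr f \<longleftrightarrow> (\<exists>X Y. f \<in> Hom C X Y)"

definition src :: "'m \<Rightarrow> 'o" where
  "src f = (THE X. \<exists>Y. f \<in> Hom C X Y)"

definition tgt :: "'m \<Rightarrow> 'o" where
  "tgt f = (THE Y. \<exists>X. f \<in> Hom C X Y)"

lemma in_hom_unique: "f \<in> Hom C X Y \<Longrightarrow> f \<in> Hom C X' Y' \<Longrightarrow> X = X' \<and> Y = Y'"
  using category unfolding is_category_def by meson

lemma in_hom_objects: "f \<in> Hom C X Y \<Longrightarrow> X \<in> Ob C \<and> Y \<in> Ob C"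
  using category unfolding is_category_def by (metis empty_iff)

lemma in_homD:
  assumes "f \<in> Hom C X Y"
  shows "arr f" and "src f = X" and "tgt f = Y"
proof -
  show "arr f" using assms unfolding arr_def by blast
  show "src f = X" unfolding src_def using assms in_hom_unique by (intro the_equality) blast+
  show "tgt f = Y" unfolding tgt_def using assms in_hom_unique by (intro the_equality) blast+
qed

lemma arr_in_hom: "arr f \<Longrightarrow> f \<in> Hom C (src f) (tgt f)"
  unfolding arr_def using in_homD by blast

lemma in_hom_iff: "f \<in> Hom C X Y \<longleftrightarrow> arr f \<and> src f = X \<and> tgt f = Y"
  using in_homD arr_in_hom by blast

lemma src_in_Ob [simp]: "arr f \<Longrightarrow> src f \<in> Ob C"
  and tgt_in_Ob [simp]: "arr f \<Longrightarrow> tgt f \<in> Ob C"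
  using arr_in_hom in_hom_objects by blast+

lemma unit_in_Ob [simp]: "\<I> \<in> Ob C"
  and tensor_in_Ob [simp]: "X \<in> Ob C \<Longrightarrow> Y \<in> Ob C \<Longrightarrow> X \<odot> Y \<in> Ob C"
  using strict_monoidal unfolding is_strict_monoidal_def by auto

lemma tensor_obj_assoc [simp]:
  "X \<in> Ob C \<Longrightarrow> Y \<in> Ob C \<Longrightarrow> Z \<in> Ob C \<Longrightarrow> (X \<odot> Y) \<odot> Z = X \<odot> Y \<odot> Z"
  and tensor_obj_unit_left [simp]: "X \<in> Ob C \<Longrightarrow> \<I> \<odot> X = X"
  and tensor_obj_unit_right [simp]: "X \<in> Ob C \<Longrightarrow> X \<odot> \<I> = X"
  using strict_monoidal unfolding is_strict_monoidal_def by auto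

lemma comp_in_hom: "f \<in> Hom C X Y \<Longrightarrow> g \<in> Hom C Y Z \<Longrightarrow> g \<cdot> f \<in> Hom C X Z"
  using category unfolding is_category_def by blast

lemma tensor_in_hom: "f \<in> Hom C X Y \<Longrightarrow> g \<in> Hom C X' Y' \<Longrightarrow> f \<otimes> g \<in> Hom C (X \<odot> X') (Y \<odot> Y')"
  using strict_monoidal unfolding is_strict_monoidal_def by meson

lemma ident_in_hom: "X \<in> Ob C \<Longrightarrow> \<one>\<^bsub>X\<^esub> \<in> Hom C X X"
  using category unfolding is_category_def by blast

lemma arr_comp [simp]: "arr f \<Longrightarrow> arr g \<Longrightarrow> tgt f = src g \<Longrightarrow> arr (g \<cdot> f)"
  and src_comp [simp]: "arr f \<Longrightarrow> arr g \<Longrightarrow> tgt f = src g \<Longrightarrow> src (g \<cdot> f) = src f"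
  and tgt_comp [simp]: "arr f \<Longrightarrow> arr g \<Longrightarrow> tgt f = src g \<Longrightarrow> tgt (g \<cdot> f) = tgt g"
  using comp_in_hom[of f "src f" "tgt f" g "tgt g"] arr_in_hom in_homD by metis+

lemma arr_tensor [simp]: "arr f \<Longrightarrow> arr g \<Longrightarrow> arr (f \<otimes> g)"
  and src_tensor [simp]: "arr f \<Longrightarrow> arr g \<Longrightarrow> src (f \<otimes> g) = src f \<odot> src g"
  and tgt_tensor [simp]: "arr f \<Longrightarrow> arr g \<Longrightarrow> tgt (f \<otimes> g) = tgt f \<odot> tgt g"
  using tensor_in_hom[of f "src f" "tgt f" g "src g" "tgt g"] arr_in_hom in_homD by metis+

lemma arr_ident [simp]: "X \<in> Ob C \<Longrightarrow> arr \<one>\<^bsub>X\<^esub>"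
  and src_ident [simp]: "X \<in> Ob C \<Longrightarrow> src \<one>\<^bsub>X\<^esub> = X"
  and tgt_ident [simp]: "X \<in> Ob C \<Longrightarrow> tgt \<one>\<^bsub>X\<^esub> = X"
  using ident_in_hom in_homD by metis+

lemma comp_assoc [simp]:
  "arr f \<Longrightarrow> arr g \<Longrightarrow> arr h \<Longrightarrow> tgt f = src g \<Longrightarrow> tgt g = src h \<Longrightarrow> (h \<cdot> g) \<cdot> f = h \<cdot> g \<cdot> f"
  using category arr_in_hom unfolding is_category_def by metis

lemma comp_ident_left [simp]: "arr f \<Longrightarrow> tgt f = Y \<Longrightarrow> \<one>\<^bsub>Y\<^esub> \<cdot> f = f"
  and comp_ident_right [simp]: "arr f \<Longrightarrow> src f = X \<Longrightarrow> f \<cdot> \<one>\<^bsub>X\<^esub> = f"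
  using category arr_in_hom unfolding is_category_def by metis+

lemma tensor_assoc [simp]: "arr f \<Longrightarrow> arr g \<Longrightarrow> arr h \<Longrightarrow> (f \<otimes> g) \<otimes> h = f \<otimes> g \<otimes> h"
  and tensor_unit_left [simp]: "arr f \<Longrightarrow> \<one>\<^bsub>\<I>\<^esub> \<otimes> f = f"
  and tensor_unit_right [simp]: "arr f \<Longrightarrow> f \<otimes> \<one>\<^bsub>\<I>\<^esub> = f"
  using strict_monoidal arr_in_hom unfolding is_strict_monoidal_def by metis+

lemma tensor_ident [simp]: "X \<in> Ob C \<Longrightarrow> Y \<in> Ob C \<Longrightarrow> \<one>\<^bsub>X\<^esub> \<otimes> \<one>\<^bsub>Y\<^esub> = \<one>\<^bsub>X \<odot> Y\<^esub>"
  using strict_monoidal unfolding is_strict_monoidal_def by metis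

lemma interchange:
  "arr f \<Longrightarrow> arr g \<Longrightarrow> arr f' \<Longrightarrow> arr g' \<Longrightarrow> tgt f = src g \<Longrightarrow> tgt f' = src g' \<Longrightarrow>
   (g \<otimes> g') \<cdot> (f \<otimes> f') = (g \<cdot> f) \<otimes> (g' \<cdot> f')"
  using strict_monoidal arr_in_hom unfolding is_strict_monoidal_def by metis

lemma tensor_ident_assoc [simp]:
  "X \<in> Ob C \<Longrightarrow> Y \<in> Ob C \<Longrightarrow> arr f \<Longrightarrow> \<one>\<^bsub>X\<^esub> \<otimes> \<one>\<^bsub>Y\<^esub> \<otimes> f = \<one>\<^bsub>X \<odot> Y\<^esub> \<otimes> f"
  by (subst tensor_assoc[symmetric]) simp_all

lemma comp_reassoc:
  "g \<cdot> f = h \<Longrightarrow> arr f \<Longrightarrow> arr g \<Longrightarrow> arr k \<Longrightarrow> tgt k = src f \<Longrightarrow> tgt f = src g \<Longrightarrow>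
   g \<cdot> f \<cdot> k = h \<cdot> k"
  by (subst comp_assoc[symmetric]) simp_all

lemma tensor_slide:
  assumes "arr f" "arr g"
  shows "(f \<otimes> \<one>\<^bsub>tgt g\<^esub>) \<cdot> (\<one>\<^bsub>src f\<^esub> \<otimes> g) = f \<otimes> g"
    and "(\<one>\<^bsub>tgt f\<^esub> \<otimes> g) \<cdot> (f \<otimes> \<one>\<^bsub>src g\<^esub>) = f \<otimes> g"
  using assms by (simp_all add: interchange)

lemma comp_tensor_ident_right:
  "arr f \<Longrightarrow> arr g \<Longrightarrow> tgt f = src g \<Longrightarrow> X \<in> Ob C \<Longrightarrow>
   (g \<cdot> f) \<otimes> \<one>\<^bsub>X\<^esub> = (g \<otimes> \<one>\<^bsub>X\<^esub>) \<cdot> (f \<otimes> \<one>\<^bsub>X\<^esub>)"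
  and comp_tensor_ident_left:
  "arr f \<Longrightarrow> arr g \<Longrightarrow> tgt f = src g \<Longrightarrow> X \<in> Ob C \<Longrightarrow>
   \<one>\<^bsub>X\<^esub> \<otimes> (g \<cdot> f) = (\<one>\<^bsub>X\<^esub> \<otimes> g) \<cdot> (\<one>\<^bsub>X\<^esub> \<otimes> f)"
  by (simp_all add: interchange)

lemma homA_inverse:
  assumes A: "A \<in> Ob C" and \<rho>: "\<rho> \<in> Hom C (A \<odot> M) M" and \<sigma>: "\<sigma> \<in> Hom C (A \<odot> N) N"
    and f: "f \<in> homA C A M \<rho> N \<sigma>" and g: "g \<in> Hom C N M"
    and gf: "g \<cdot> f = \<one>\<^bsub>M\<^esub>" and fg: "f \<cdot> g = \<one>\<^bsub>N\<^esub>"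
  shows "g \<in> homA C A N \<sigma> M \<rho>"
proof -
  have f_hom: "f \<in> Hom C M N" and f_linear: "f \<cdot> \<rho> = \<sigma> \<cdot> (\<one>\<^bsub>A\<^esub> \<otimes> f)"
    using f unfolding homA_def by blast+
  have typing: "M \<in> Ob C" "N \<in> Ob C" "arr f" "src f = M" "tgt f = N" "arr g" "src g = N" "tgt g = M"
    "arr \<rho>" "src \<rho> = A \<odot> M" "tgt \<rho> = M" "arr \<sigma>" "src \<sigma> = A \<odot> N" "tgt \<sigma> = N"
    using f_hom g \<rho> \<sigma> in_hom_objects[OF g] by (simp_all add: in_hom_iff)
  have "g \<cdot> \<sigma> = g \<cdot> \<sigma> \<cdot> (\<one>\<^bsub>A\<^esub> \<otimes> f) \<cdot> (\<one>\<^bsub>A\<^esub> \<otimes> g)"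
    using A typing by (simp add: interchange fg)
  also have "\<dots> = (g \<cdot> f) \<cdot> \<rho> \<cdot> (\<one>\<^bsub>A\<^esub> \<otimes> g)"
    using A typing by (simp add: comp_reassoc[OF f_linear[symmetric]])
  also have "\<dots> = \<rho> \<cdot> (\<one>\<^bsub>A\<^esub> \<otimes> g)"
    using A typing by (simp add: gf)
  finally show ?thesis
    using g unfolding homA_def by blast
qed

end

locale right_dual_category = strict_monoidal_category C for C :: "('o, 'm) tcat" +
  fixes dl :: "'o \<Rightarrow> 'o" and b d :: "'o \<Rightarrow> 'm"
  assumes right_duality: "right_duality C dl b d"
begin

lemma dual_in_Ob [simp]: "Y \<in> Ob C \<Longrightarrow> dl Y \<in> Ob C"
  and coev_in_hom: "Y \<in> Ob C \<Longrightarrow> b Y \<in> Hom C \<I> (Y \<odot> dl Y)"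
  and ev_in_hom: "Y \<in> Ob C \<Longrightarrow> d Y \<in> Hom C (dl Y \<odot> Y) \<I>"
  and zigzag_object: "Y \<in> Ob C \<Longrightarrow> (\<one>\<^bsub>Y\<^esub> \<otimes> d Y) \<cdot> (b Y \<otimes> \<one>\<^bsub>Y\<^esub>) = \<one>\<^bsub>Y\<^esub>"
  and zigzag_dual: "Y \<in> Ob C \<Longrightarrow> (d Y \<otimes> \<one>\<^bsub>dl Y\<^esub>) \<cdot> (\<one>\<^bsub>dl Y\<^esub> \<otimes> b Y) = \<one>\<^bsub>dl Y\<^esub>"
  using right_duality unfolding right_duality_def by blast+

lemma arr_coev [simp]: "Y \<in> Ob C \<Longrightarrow> arr (b Y)"
  and src_coev [simp]: "Y \<in> Ob C \<Longrightarrow> src (b Y) = \<I>"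
  and tgt_coev [simp]: "Y \<in> Ob C \<Longrightarrow> tgt (b Y) = Y \<odot> dl Y"
  and arr_ev [simp]: "Y \<in> Ob C \<Longrightarrow> arr (d Y)"
  and src_ev [simp]: "Y \<in> Ob C \<Longrightarrow> src (d Y) = dl Y \<odot> Y"
  and tgt_ev [simp]: "Y \<in> Ob C \<Longrightarrow> tgt (d Y) = \<I>"
  using coev_in_hom ev_in_hom in_homD by blast+

definition dual_transpose :: "'o \<Rightarrow> 'o \<Rightarrow> 'm \<Rightarrow> 'm" where
  "dual_transpose X Y p = (p \<otimes> \<one>\<^bsub>dl Y\<^esub>) \<cdot> (\<one>\<^bsub>X\<^esub> \<otimes> b Y)"

lemma dual_transpose_in_hom:
  assumes "X \<in> Ob C" "Y \<in> Ob C" "p \<in> Hom C (X \<odot> Y) \<I>"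
  shows "dual_transpose X Y p \<in> Hom C X (dl Y)"
  using assms by (auto simp: dual_transpose_def in_hom_iff)

lemma ev_dual_transpose:
  assumes X: "X \<in> Ob C" and Y: "Y \<in> Ob C" and p: "p \<in> Hom C (X \<odot> Y) \<I>"
  shows "d Y \<cdot> (dual_transpose X Y p \<otimes> \<one>\<^bsub>Y\<^esub>) = p"
proof -
  have p': "arr p" "src p = X \<odot> Y" "tgt p = \<I>"
    using p by (simp_all add: in_hom_iff)
  have "d Y \<cdot> (dual_transpose X Y p \<otimes> \<one>\<^bsub>Y\<^esub>) =
        d Y \<cdot> (p \<otimes> \<one>\<^bsub>dl Y \<odot> Y\<^esub>) \<cdot> (\<one>\<^bsub>X\<^esub> \<otimes> b Y \<otimes> \<one>\<^bsub>Y\<^esub>)"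
    unfolding dual_transpose_def using X Y p' by (simp add: comp_tensor_ident_right)
  also have "\<dots> = (p \<otimes> d Y) \<cdot> (\<one>\<^bsub>X\<^esub> \<otimes> b Y \<otimes> \<one>\<^bsub>Y\<^esub>)"
  proof -
    have slide: "d Y \<cdot> (p \<otimes> \<one>\<^bsub>dl Y \<odot> Y\<^esub>) = p \<otimes> d Y"
      using X Y p' tensor_slide(2)[of p "d Y"] by simp
    show ?thesis using X Y p' by (simp add: comp_reassoc[OF slide])
  qed
  also have "\<dots> = p \<cdot> (\<one>\<^bsub>X \<odot> Y\<^esub> \<otimes> d Y) \<cdot> (\<one>\<^bsub>X\<^esub> \<otimes> b Y \<otimes> \<one>\<^bsub>Y\<^esub>)"
  proof -
    have slide: "p \<cdot> (\<one>\<^bsub>X \<odot> Y\<^esub> \<otimes> d Y) = p \<otimes> d Y"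
      using X Y p' tensor_slide(1)[of p "d Y"] by simp
    show ?thesis using X Y p' by (simp add: comp_reassoc[OF slide])
  qed
  also have "\<dots> = p \<cdot> (\<one>\<^bsub>X\<^esub> \<otimes> ((\<one>\<^bsub>Y\<^esub> \<otimes> d Y) \<cdot> (b Y \<otimes> \<one>\<^bsub>Y\<^esub>)))"
    using X Y p' interchange[of "\<one>\<^bsub>X\<^esub>" "\<one>\<^bsub>X\<^esub>" "b Y \<otimes> \<one>\<^bsub>Y\<^esub>" "\<one>\<^bsub>Y\<^esub> \<otimes> d Y"]
    by simp
  also have "\<dots> = p"
    using X Y p' by (simp add: zigzag_object)
  finally show ?thesis .
qed

lemma dual_transpose_ev:
  assumes X: "X \<in> Ob C" and Y: "Y \<in> Ob C" and h: "h \<in> Hom C X (dl Y)"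
  shows "dual_transpose X Y (d Y \<cdot> (h \<otimes> \<one>\<^bsub>Y\<^esub>)) = h"
proof -
  have h': "arr h" "src h = X" "tgt h = dl Y"
    using h by (simp_all add: in_hom_iff)
  have "dual_transpose X Y (d Y \<cdot> (h \<otimes> \<one>\<^bsub>Y\<^esub>)) =
        (d Y \<otimes> \<one>\<^bsub>dl Y\<^esub>) \<cdot> (h \<otimes> \<one>\<^bsub>Y \<odot> dl Y\<^esub>) \<cdot> (\<one>\<^bsub>X\<^esub> \<otimes> b Y)"
    unfolding dual_transpose_def using X Y h' by (simp add: comp_tensor_ident_right)
  also have "\<dots> = (d Y \<otimes> \<one>\<^bsub>dl Y\<^esub>) \<cdot> (h \<otimes> b Y)"
    using X Y h' tensor_slide(1)[of h "b Y"] by simp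
  also have "\<dots> = (d Y \<otimes> \<one>\<^bsub>dl Y\<^esub>) \<cdot> (\<one>\<^bsub>dl Y\<^esub> \<otimes> b Y) \<cdot> h"
    using X Y h' tensor_slide(2)[of h "b Y"] by simp
  also have "\<dots> = h"
    using X Y h' by (simp add: comp_reassoc[OF zigzag_dual[OF Y]])
  finally show ?thesis .
qed

lemma ev_cancel:
  assumes "X \<in> Ob C" "Y \<in> Ob C" "h \<in> Hom C X (dl Y)" "h' \<in> Hom C X (dl Y)"
    and "d Y \<cdot> (h \<otimes> \<one>\<^bsub>Y\<^esub>) = d Y \<cdot> (h' \<otimes> \<one>\<^bsub>Y\<^esub>)"
  shows "h = h'"
  by (metis assms dual_transpose_ev)

end

locale frobenius_algebra = strict_monoidal_category C for C :: "('o, 'm) tcat" +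
  fixes A :: 'o and m \<eta> \<Delta> \<epsilon> :: 'm
  assumes frobenius: "is_frobenius C A m \<eta> \<Delta> \<epsilon>"
begin

lemma algebra_in_Ob [simp]: "A \<in> Ob C"
  and mult_in_hom: "m \<in> Hom C (A \<odot> A) A"
  and unit_in_hom: "\<eta> \<in> Hom C \<I> A"
  and comult_in_hom: "\<Delta> \<in> Hom C A (A \<odot> A)"
  and counit_in_hom: "\<epsilon> \<in> Hom C A \<I>"
  using frobenius unfolding is_frobenius_def is_algebra_def is_coalgebra_def by blast+

lemma arr_mult [simp]: "arr m" and src_mult [simp]: "src m = A \<odot> A" and tgt_mult [simp]: "tgt m = A"
  and arr_unit [simp]: "arr \<eta>" and src_unit [simp]: "src \<eta> = \<I>" and tgt_unit [simp]: "tgt \<eta> = A"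
  and arr_comult [simp]: "arr \<Delta>" and src_comult [simp]: "src \<Delta> = A"
  and tgt_comult [simp]: "tgt \<Delta> = A \<odot> A"
  and arr_counit [simp]: "arr \<epsilon>" and src_counit [simp]: "src \<epsilon> = A" and tgt_counit [simp]: "tgt \<epsilon> = \<I>"
  using mult_in_hom unit_in_hom comult_in_hom counit_in_hom in_homD by blast+

lemma mult_assoc: "m \<cdot> (\<one>\<^bsub>A\<^esub> \<otimes> m) = m \<cdot> (m \<otimes> \<one>\<^bsub>A\<^esub>)"
  and mult_unit_right: "m \<cdot> (\<one>\<^bsub>A\<^esub> \<otimes> \<eta>) = \<one>\<^bsub>A\<^esub>"
  and mult_unit_left: "m \<cdot> (\<eta> \<otimes> \<one>\<^bsub>A\<^esub>) = \<one>\<^bsub>A\<^esub>"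
  and comult_counit_right: "(\<one>\<^bsub>A\<^esub> \<otimes> \<epsilon>) \<cdot> \<Delta> = \<one>\<^bsub>A\<^esub>"
  and comult_counit_left: "(\<epsilon> \<otimes> \<one>\<^bsub>A\<^esub>) \<cdot> \<Delta> = \<one>\<^bsub>A\<^esub>"
  and frobenius_left: "(\<one>\<^bsub>A\<^esub> \<otimes> m) \<cdot> (\<Delta> \<otimes> \<one>\<^bsub>A\<^esub>) = \<Delta> \<cdot> m"
  and frobenius_right: "(m \<otimes> \<one>\<^bsub>A\<^esub>) \<cdot> (\<one>\<^bsub>A\<^esub> \<otimes> \<Delta>) = \<Delta> \<cdot> m"
  using frobenius unfolding is_frobenius_def is_algebra_def is_coalgebra_def by metis+

definition frobenius_form :: 'm where
  "frobenius_form = \<epsilon> \<cdot> m"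

definition frobenius_copairing :: 'm where
  "frobenius_copairing = \<Delta> \<cdot> \<eta>"

lemma frobenius_form_in_hom: "frobenius_form \<in> Hom C (A \<odot> A) \<I>"
  and frobenius_copairing_in_hom: "frobenius_copairing \<in> Hom C \<I> (A \<odot> A)"
  unfolding frobenius_form_def frobenius_copairing_def by (simp_all add: in_hom_iff)

lemma arr_frobenius_form [simp]: "arr frobenius_form"
  and src_frobenius_form [simp]: "src frobenius_form = A \<odot> A"
  and tgt_frobenius_form [simp]: "tgt frobenius_form = \<I>"
  and arr_frobenius_copairing [simp]: "arr frobenius_copairing"
  and src_frobenius_copairing [simp]: "src frobenius_copairing = \<I>"
  and tgt_frobenius_copairing [simp]: "tgt frobenius_copairing = A \<odot> A"
  using frobenius_form_in_hom frobenius_copairing_in_hom in_homD by blast+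

lemma frobenius_form_assoc:
  "frobenius_form \<cdot> (\<one>\<^bsub>A\<^esub> \<otimes> m) = frobenius_form \<cdot> (m \<otimes> \<one>\<^bsub>A\<^esub>)"
  unfolding frobenius_form_def by (simp add: mult_assoc)

lemma frobenius_zigzag_left:
  "(frobenius_form \<otimes> \<one>\<^bsub>A\<^esub>) \<cdot> (\<one>\<^bsub>A\<^esub> \<otimes> frobenius_copairing) = \<one>\<^bsub>A\<^esub>"
proof -
  have "(frobenius_form \<otimes> \<one>\<^bsub>A\<^esub>) \<cdot> (\<one>\<^bsub>A\<^esub> \<otimes> frobenius_copairing) =
        (\<epsilon> \<otimes> \<one>\<^bsub>A\<^esub>) \<cdot> ((m \<otimes> \<one>\<^bsub>A\<^esub>) \<cdot> (\<one>\<^bsub>A\<^esub> \<otimes> \<Delta>)) \<cdot> (\<one>\<^bsub>A\<^esub> \<otimes> \<eta>)"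
    unfolding frobenius_form_def frobenius_copairing_def
    by (simp add: comp_tensor_ident_right comp_tensor_ident_left)
  also have "\<dots> = ((\<epsilon> \<otimes> \<one>\<^bsub>A\<^esub>) \<cdot> \<Delta>) \<cdot> m \<cdot> (\<one>\<^bsub>A\<^esub> \<otimes> \<eta>)"
    by (simp add: frobenius_right)
  also have "\<dots> = \<one>\<^bsub>A\<^esub>"
    by (simp add: comult_counit_left mult_unit_right)
  finally show ?thesis .
qed

lemma frobenius_zigzag_right:
  "(\<one>\<^bsub>A\<^esub> \<otimes> frobenius_form) \<cdot> (frobenius_copairing \<otimes> \<one>\<^bsub>A\<^esub>) = \<one>\<^bsub>A\<^esub>"
proof -
  have "(\<one>\<^bsub>A\<^esub> \<otimes> frobenius_form) \<cdot> (frobenius_copairing \<otimes> \<one>\<^bsub>A\<^esub>) =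
        (\<one>\<^bsub>A\<^esub> \<otimes> \<epsilon>) \<cdot> ((\<one>\<^bsub>A\<^esub> \<otimes> m) \<cdot> (\<Delta> \<otimes> \<one>\<^bsub>A\<^esub>)) \<cdot> (\<eta> \<otimes> \<one>\<^bsub>A\<^esub>)"
    unfolding frobenius_form_def frobenius_copairing_def
    by (simp add: comp_tensor_ident_right comp_tensor_ident_left)
  also have "\<dots> = ((\<one>\<^bsub>A\<^esub> \<otimes> \<epsilon>) \<cdot> \<Delta>) \<cdot> m \<cdot> (\<eta> \<otimes> \<one>\<^bsub>A\<^esub>)"
    by (simp add: frobenius_left)
  also have "\<dots> = \<one>\<^bsub>A\<^esub>"
    by (simp add: comult_counit_right mult_unit_left)
  finally show ?thesis .
qed

end

locale frobenius_algebra_with_dual =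
  right_dual_category C dl b d + frobenius_algebra C A m \<eta> \<Delta> \<epsilon>
  for C :: "('o, 'm) tcat" and dl b d A m \<eta> \<Delta> \<epsilon>
begin

abbreviation "\<Phi> \<equiv> frob_Phi C A m \<epsilon> dl b"

definition frob_Psi :: 'm where
  "frob_Psi = (d A \<otimes> \<one>\<^bsub>A\<^esub>) \<cdot> (\<one>\<^bsub>dl A\<^esub> \<otimes> frobenius_copairing)"

lemma frob_Phi_eq_dual_transpose: "\<Phi> = dual_transpose A A frobenius_form"
  unfolding frob_Phi_def dual_transpose_def frobenius_form_def
  by (simp add: comp_tensor_ident_right)

lemma frob_Phi_in_hom: "\<Phi> \<in> Hom C A (dl A)"
  and frob_Psi_in_hom: "frob_Psi \<in> Hom C (dl A) A"
  unfolding frob_Phi_eq_dual_transpose frob_Psi_def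
  by (simp_all add: dual_transpose_in_hom frobenius_form_in_hom) (simp add: in_hom_iff)

lemma arr_frob_Phi [simp]: "arr \<Phi>" and src_frob_Phi [simp]: "src \<Phi> = A"
  and tgt_frob_Phi [simp]: "tgt \<Phi> = dl A"
  and arr_frob_Psi [simp]: "arr frob_Psi" and src_frob_Psi [simp]: "src frob_Psi = dl A"
  and tgt_frob_Psi [simp]: "tgt frob_Psi = A"
  using frob_Phi_in_hom frob_Psi_in_hom in_homD by blast+

lemma ev_frob_Phi: "d A \<cdot> (\<Phi> \<otimes> \<one>\<^bsub>A\<^esub>) = frobenius_form"
  unfolding frob_Phi_eq_dual_transpose
  by (simp add: ev_dual_transpose frobenius_form_in_hom)

lemma frob_Psi_Phi: "frob_Psi \<cdot> \<Phi> = \<one>\<^bsub>A\<^esub>"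
proof -
  have "frob_Psi \<cdot> \<Phi> = (d A \<otimes> \<one>\<^bsub>A\<^esub>) \<cdot> (\<Phi> \<otimes> frobenius_copairing)"
    unfolding frob_Psi_def using tensor_slide(2)[of \<Phi> frobenius_copairing] by simp
  also have "\<dots> = ((d A \<cdot> (\<Phi> \<otimes> \<one>\<^bsub>A\<^esub>)) \<otimes> \<one>\<^bsub>A\<^esub>) \<cdot> (\<one>\<^bsub>A\<^esub> \<otimes> frobenius_copairing)"
    using tensor_slide(1)[of \<Phi> frobenius_copairing] by (simp add: comp_tensor_ident_right)
  also have "\<dots> = \<one>\<^bsub>A\<^esub>"
    by (simp add: ev_frob_Phi frobenius_zigzag_left)
  finally show ?thesis .
qed

lemma frob_Phi_Psi: "\<Phi> \<cdot> frob_Psi = \<one>\<^bsub>dl A\<^esub>"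
proof (rule ev_cancel)
  have "d A \<cdot> ((\<Phi> \<cdot> frob_Psi) \<otimes> \<one>\<^bsub>A\<^esub>) = frobenius_form \<cdot> (frob_Psi \<otimes> \<one>\<^bsub>A\<^esub>)"
    by (simp add: comp_tensor_ident_right comp_reassoc[OF ev_frob_Phi])
  also have "\<dots> = (d A \<otimes> frobenius_form) \<cdot> (\<one>\<^bsub>dl A\<^esub> \<otimes> frobenius_copairing \<otimes> \<one>\<^bsub>A\<^esub>)"
  proof -
    have slide: "frobenius_form \<cdot> (d A \<otimes> \<one>\<^bsub>A \<odot> A\<^esub>) = d A \<otimes> frobenius_form"
      using tensor_slide(2)[of "d A" frobenius_form] by simp
    show ?thesis
      unfolding frob_Psi_def by (simp add: comp_tensor_ident_right comp_reassoc[OF slide])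
  qed
  also have "\<dots> = d A \<cdot> (\<one>\<^bsub>dl A\<^esub> \<otimes> ((\<one>\<^bsub>A\<^esub> \<otimes> frobenius_form) \<cdot> (frobenius_copairing \<otimes> \<one>\<^bsub>A\<^esub>)))"
  proof -
    have slide: "d A \<cdot> (\<one>\<^bsub>dl A \<odot> A\<^esub> \<otimes> frobenius_form) = d A \<otimes> frobenius_form"
      using tensor_slide(1)[of "d A" frobenius_form] by simp
    show ?thesis
      by (simp add: comp_tensor_ident_left comp_reassoc[OF slide])
  qed
  also have "\<dots> = d A \<cdot> (\<one>\<^bsub>dl A\<^esub> \<otimes> \<one>\<^bsub>A\<^esub>)"
    by (simp add: frobenius_zigzag_right)
  finally show "d A \<cdot> ((\<Phi> \<cdot> frob_Psi) \<otimes> \<one>\<^bsub>A\<^esub>) = d A \<cdot> (\<one>\<^bsub>dl A\<^esub> \<otimes> \<one>\<^bsub>A\<^esub>)" .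
qed (simp_all add: in_hom_iff)

end

locale frobenius_algebra_with_dual_and_swap =
  frobenius_algebra_with_dual C dl b d A m \<eta> \<Delta> \<epsilon>
  for C :: "('o, 'm) tcat" and dl b d A m \<eta> \<Delta> \<epsilon> +
  fixes cs :: "'o \<Rightarrow> 'm"
  assumes swap: "is_A_swap C A m \<eta> cs"
begin

abbreviation inv_swap :: "'o \<Rightarrow> 'm" where
  "inv_swap X \<equiv> inv_mor C (X \<odot> A) (A \<odot> X) (cs X)"

lemma swap_in_hom: "X \<in> Ob C \<Longrightarrow> cs X \<in> Hom C (X \<odot> A) (A \<odot> X)"
  and inv_swap_iso: "X \<in> Ob C \<Longrightarrow> inv_swap X \<in> Hom C (A \<odot> X) (X \<odot> A) \<and>
     inv_swap X \<cdot> cs X = \<one>\<^bsub>X \<odot> A\<^esub> \<and> cs X \<cdot> inv_swap X = \<one>\<^bsub>A \<odot> X\<^esub>"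
proof -
  assume "X \<in> Ob C"
  then have iso: "iso_mor C (X \<odot> A) (A \<odot> X) (cs X)"
    using swap unfolding is_A_swap_def by blast
  then show "cs X \<in> Hom C (X \<odot> A) (A \<odot> X)"
    unfolding iso_mor_def by blast
  from iso have "\<exists>g. g \<in> Hom C (A \<odot> X) (X \<odot> A) \<and>
     g \<cdot> cs X = \<one>\<^bsub>X \<odot> A\<^esub> \<and> cs X \<cdot> g = \<one>\<^bsub>A \<odot> X\<^esub>"
    unfolding iso_mor_def by blast
  then show "inv_swap X \<in> Hom C (A \<odot> X) (X \<odot> A) \<and>
     inv_swap X \<cdot> cs X = \<one>\<^bsub>X \<odot> A\<^esub> \<and> cs X \<cdot> inv_swap X = \<one>\<^bsub>A \<odot> X\<^esub>"
    unfolding inv_mor_def by (rule someI_ex)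
qed

lemma arr_swap [simp]: "X \<in> Ob C \<Longrightarrow> arr (cs X)"
  and src_swap [simp]: "X \<in> Ob C \<Longrightarrow> src (cs X) = X \<odot> A"
  and tgt_swap [simp]: "X \<in> Ob C \<Longrightarrow> tgt (cs X) = A \<odot> X"
  and arr_inv_swap [simp]: "X \<in> Ob C \<Longrightarrow> arr (inv_swap X)"
  and src_inv_swap [simp]: "X \<in> Ob C \<Longrightarrow> src (inv_swap X) = A \<odot> X"
  and tgt_inv_swap [simp]: "X \<in> Ob C \<Longrightarrow> tgt (inv_swap X) = X \<odot> A"
  and inv_swap_swap [simp]: "X \<in> Ob C \<Longrightarrow> inv_swap X \<cdot> cs X = \<one>\<^bsub>X \<odot> A\<^esub>"
  and swap_inv_swap [simp]: "X \<in> Ob C \<Longrightarrow> cs X \<cdot> inv_swap X = \<one>\<^bsub>A \<odot> X\<^esub>"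
  using swap_in_hom inv_swap_iso in_homD by blast+

lemma swap_natural: "f \<in> Hom C X Y \<Longrightarrow> cs Y \<cdot> (f \<otimes> \<one>\<^bsub>A\<^esub>) = (\<one>\<^bsub>A\<^esub> \<otimes> f) \<cdot> cs X"
  using swap ident_in_hom[OF algebra_in_Ob] unfolding is_A_swap_def by blast

lemma inv_swap_natural:
  assumes f: "f \<in> Hom C X Y"
  shows "inv_swap Y \<cdot> (\<one>\<^bsub>A\<^esub> \<otimes> f) = (f \<otimes> \<one>\<^bsub>A\<^esub>) \<cdot> inv_swap X"
proof -
  have f': "arr f" "src f = X" "tgt f = Y" "X \<in> Ob C" "Y \<in> Ob C"
    using in_homD[OF f] in_hom_objects[OF f] by simp_all
  have cancel: "inv_swap Y \<cdot> (\<one>\<^bsub>A\<^esub> \<otimes> f) \<cdot> cs X = f \<otimes> \<one>\<^bsub>A\<^esub>"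
    using f' by (simp add: swap_natural[OF f, symmetric] comp_reassoc[OF inv_swap_swap])
  have "inv_swap Y \<cdot> (\<one>\<^bsub>A\<^esub> \<otimes> f) = (inv_swap Y \<cdot> (\<one>\<^bsub>A\<^esub> \<otimes> f) \<cdot> cs X) \<cdot> inv_swap X"
    using f' by simp
  then show ?thesis
    by (simp only: cancel)
qed

lemma dual_action_eq_dual_transpose:
  assumes M: "M \<in> Ob C" and \<rho>: "\<rho> \<in> Hom C (A \<odot> M) M"
  shows "dual_action C A cs dl b d M \<rho> =
    dual_transpose (A \<odot> dl M) M (d M \<cdot> (\<one>\<^bsub>dl M\<^esub> \<otimes> \<rho>) \<cdot> (inv_swap (dl M) \<otimes> \<one>\<^bsub>M\<^esub>))"
proof -
  have \<rho>': "arr \<rho>" "src \<rho> = A \<odot> M" "tgt \<rho> = M"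
    using \<rho> by (simp_all add: in_hom_iff)
  have slide: "(inv_swap (dl M) \<otimes> \<one>\<^bsub>M \<odot> dl M\<^esub>) \<cdot> (\<one>\<^bsub>A \<odot> dl M\<^esub> \<otimes> b M) = inv_swap (dl M) \<otimes> b M"
    using M tensor_slide(1)[of "inv_swap (dl M)" "b M"] by simp
  show ?thesis
    unfolding dual_action_def dual_transpose_def
    using M \<rho>' by (simp add: comp_tensor_ident_right slide)
qed

lemma ev_dual_action:
  assumes M: "M \<in> Ob C" and \<rho>: "\<rho> \<in> Hom C (A \<odot> M) M"
  shows "d M \<cdot> (dual_action C A cs dl b d M \<rho> \<otimes> \<one>\<^bsub>M\<^esub>) =
    d M \<cdot> (\<one>\<^bsub>dl M\<^esub> \<otimes> \<rho>) \<cdot> (inv_swap (dl M) \<otimes> \<one>\<^bsub>M\<^esub>)"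
  using M \<rho> unfolding dual_action_eq_dual_transpose[OF M \<rho>]
  by (intro ev_dual_transpose) (simp_all add: in_hom_iff)

lemma dual_action_in_hom:
  assumes M: "M \<in> Ob C" and \<rho>: "\<rho> \<in> Hom C (A \<odot> M) M"
  shows "dual_action C A cs dl b d M \<rho> \<in> Hom C (A \<odot> dl M) (dl M)"
  using M \<rho> unfolding dual_action_eq_dual_transpose[OF M \<rho>]
  by (intro dual_transpose_in_hom) (simp_all add: in_hom_iff)

abbreviation "dual_regular_action \<equiv> dual_action C A cs dl b d A m"

lemma ev_dual_regular_action_frob_Phi:
  "d A \<cdot> ((dual_regular_action \<cdot> (\<one>\<^bsub>A\<^esub> \<otimes> \<Phi>)) \<otimes> \<one>\<^bsub>A\<^esub>) =
   frobenius_form \<cdot> (\<one>\<^bsub>A\<^esub> \<otimes> m) \<cdot> (inv_swap A \<otimes> \<one>\<^bsub>A\<^esub>)"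
proof -
  have \<rho>: "arr dual_regular_action" "src dual_regular_action = A \<odot> dl A"
    "tgt dual_regular_action = dl A"
    using dual_action_in_hom[OF algebra_in_Ob mult_in_hom] by (simp_all add: in_hom_iff)
  have "frobenius_form \<cdot> (\<one>\<^bsub>A\<^esub> \<otimes> m) \<cdot> (inv_swap A \<otimes> \<one>\<^bsub>A\<^esub>) =
        d A \<cdot> (\<Phi> \<otimes> \<one>\<^bsub>A\<^esub>) \<cdot> (\<one>\<^bsub>A\<^esub> \<otimes> m) \<cdot> (inv_swap A \<otimes> \<one>\<^bsub>A\<^esub>)"
    by (simp add: comp_reassoc[OF ev_frob_Phi])
  also have "\<dots> = d A \<cdot> (\<one>\<^bsub>dl A\<^esub> \<otimes> m) \<cdot> (\<Phi> \<otimes> \<one>\<^bsub>A \<odot> A\<^esub>) \<cdot> (inv_swap A \<otimes> \<one>\<^bsub>A\<^esub>)"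
  proof -
    have slide: "(\<Phi> \<otimes> \<one>\<^bsub>A\<^esub>) \<cdot> (\<one>\<^bsub>A\<^esub> \<otimes> m) = (\<one>\<^bsub>dl A\<^esub> \<otimes> m) \<cdot> (\<Phi> \<otimes> \<one>\<^bsub>A \<odot> A\<^esub>)"
      using tensor_slide[of \<Phi> m] by simp
    show ?thesis
      by (simp add: comp_reassoc[OF slide])
  qed
  also have "\<dots> = d A \<cdot> (\<one>\<^bsub>dl A\<^esub> \<otimes> m) \<cdot> (inv_swap (dl A) \<otimes> \<one>\<^bsub>A\<^esub>) \<cdot> (\<one>\<^bsub>A\<^esub> \<otimes> \<Phi> \<otimes> \<one>\<^bsub>A\<^esub>)"
  proof -
    have "((\<Phi> \<otimes> \<one>\<^bsub>A\<^esub>) \<cdot> inv_swap A) \<otimes> \<one>\<^bsub>A\<^esub> = (inv_swap (dl A) \<cdot> (\<one>\<^bsub>A\<^esub> \<otimes> \<Phi>)) \<otimes> \<one>\<^bsub>A\<^esub>"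
      by (simp add: inv_swap_natural[OF frob_Phi_in_hom])
    then have natural: "(\<Phi> \<otimes> \<one>\<^bsub>A \<odot> A\<^esub>) \<cdot> (inv_swap A \<otimes> \<one>\<^bsub>A\<^esub>) =
        (inv_swap (dl A) \<otimes> \<one>\<^bsub>A\<^esub>) \<cdot> (\<one>\<^bsub>A\<^esub> \<otimes> \<Phi> \<otimes> \<one>\<^bsub>A\<^esub>)"
      by (simp add: comp_tensor_ident_right)
    show ?thesis
      by (simp only: natural)
  qed
  also have "\<dots> = d A \<cdot> (dual_regular_action \<otimes> \<one>\<^bsub>A\<^esub>) \<cdot> (\<one>\<^bsub>A\<^esub> \<otimes> \<Phi> \<otimes> \<one>\<^bsub>A\<^esub>)"
    using \<rho> by (simp add: comp_reassoc[OF ev_dual_action[OF algebra_in_Ob mult_in_hom]])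
  also have "\<dots> = d A \<cdot> ((dual_regular_action \<cdot> (\<one>\<^bsub>A\<^esub> \<otimes> \<Phi>)) \<otimes> \<one>\<^bsub>A\<^esub>)"
    using \<rho> by (simp add: comp_tensor_ident_right)
  finally show ?thesis
    by (rule sym)
qed

lemma frob_Phi_linear:
  assumes swap_commutative: "m \<cdot> cs A = m"
  shows "\<Phi> \<cdot> m = dual_regular_action \<cdot> (\<one>\<^bsub>A\<^esub> \<otimes> \<Phi>)"
proof (rule ev_cancel)
  have "m \<cdot> inv_swap A = (m \<cdot> cs A) \<cdot> inv_swap A"
    by (simp only: swap_commutative)
  then have mult_inv_swap: "m \<cdot> inv_swap A = m"
    by simp
  have "d A \<cdot> ((\<Phi> \<cdot> m) \<otimes> \<one>\<^bsub>A\<^esub>) = frobenius_form \<cdot> (m \<otimes> \<one>\<^bsub>A\<^esub>)"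
    by (simp add: comp_tensor_ident_right comp_reassoc[OF ev_frob_Phi])
  also have "\<dots> = frobenius_form \<cdot> (\<one>\<^bsub>A\<^esub> \<otimes> m) \<cdot> (inv_swap A \<otimes> \<one>\<^bsub>A\<^esub>)"
    by (simp add: comp_reassoc[OF frobenius_form_assoc] mult_inv_swap flip: comp_tensor_ident_right)
  also have "\<dots> = d A \<cdot> ((dual_regular_action \<cdot> (\<one>\<^bsub>A\<^esub> \<otimes> \<Phi>)) \<otimes> \<one>\<^bsub>A\<^esub>)"
    by (rule ev_dual_regular_action_frob_Phi[symmetric])
  finally show "d A \<cdot> ((\<Phi> \<cdot> m) \<otimes> \<one>\<^bsub>A\<^esub>) = d A \<cdot> ((dual_regular_action \<cdot> (\<one>\<^bsub>A\<^esub> \<otimes> \<Phi>)) \<otimes> \<one>\<^bsub>A\<^esub>)" .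
qed (use dual_action_in_hom[OF algebra_in_Ob mult_in_hom] in \<open>simp_all add: in_hom_iff\<close>)

end

theorem mainTheorem16:
  fixes C :: "('o, 'm) tcat"
    and dl :: "'o \<Rightarrow> 'o" and b d :: "'o \<Rightarrow> 'm"
    and A :: 'o and m \<eta> \<Delta> \<epsilon> :: 'm and cs :: "'o \<Rightarrow> 'm"
  assumes "strict_abelian_tensor_cat C"
    and "right_duality C dl b d"
    and "is_frobenius C A m \<eta> \<Delta> \<epsilon>"
    and "is_A_swap C A m \<eta> cs"
    and "cmp C m (cs A) = m"
  shows "frob_Phi C A m \<epsilon> dl b \<in> homA C A A m (dl A) (dual_action C A cs dl b d A m) \<and>
         (\<exists>\<psi> \<in> homA C A (dl A) (dual_action C A cs dl b d A m) A m.
            cmp C \<psi> (frob_Phi C A m \<epsilon> dl b) = idm C A \<and>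
            cmp C (frob_Phi C A m \<epsilon> dl b) \<psi> = idm C (dl A))"
proof -
  interpret frobenius_algebra_with_dual_and_swap C dl b d A m \<eta> \<Delta> \<epsilon> cs
    using assms(1-4) unfolding strict_abelian_tensor_cat_def by unfold_locales blast+
  have Phi_linear: "\<Phi> \<in> homA C A A m (dl A) dual_regular_action"
    using frob_Phi_linear[OF assms(5)] frob_Phi_in_hom unfolding homA_def by blast
  moreover have "frob_Psi \<in> homA C A (dl A) dual_regular_action A m"
    using homA_inverse[OF algebra_in_Ob mult_in_hom dual_action_in_hom[OF algebra_in_Ob mult_in_hom]
        Phi_linear frob_Psi_in_hom frob_Psi_Phi frob_Phi_Psi] .
  ultimately show ?thesis
    using frob_Psi_Phi frob_Phi_Psi by blast
qed

end
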